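(* Let $X$ be a set, $T:\mathcal P(X)\to\mathcal P(X)$ an order reversing quasi involution, and $X_0=\{x\in X: x\in T(\{x\})\}$. If $K\subseteq X$ satisfies $K=TK$, then $K\subseteq X_0$.
   Context: $\mathcal P(X)$ denotes the power set of $X$. A map $T:\mathcal P(X)\to\mathcal P(X)$ is an order reversing quasi involution if for all $K,L\subseteq X$: (i) $K\subseteq TTK$, and (ii) $L\subseteq K$ implies $TK\subseteq TL$. *)

theory Defs
  imports Main
begin

definition order_reversing_quasi_involution :: "'a set \<Rightarrow> ('a set \<Rightarrow> 'a set) \<Rightarrow> bool" where
  "order_reversing_quasi_involution X T \<longleftrightarrow>
     (\<forall>K. K \<subseteq> X \<longrightarrow> T K \<subseteq> X) \<and>
     (\<forall>K. K \<subseteq> X \<longrightarrow> K \<subseteq> T (T K)) \<and>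
     (\<forall>K L. K \<subseteq> X \<longrightarrow> L \<subseteq> K \<longrightarrow> T K \<subseteq> T L)"

end

theory Submission
  imports Defs
begin

lemma order_reversing_quasi_involutionD_antimono:
  assumes "order_reversing_quasi_involution X T" and "K \<subseteq> X" and "L \<subseteq> K"
  shows "T K \<subseteq> T L"
  using assms unfolding order_reversing_quasi_involution_def by blast

lemma mem_T_singleton_if_subset_T:
  assumes "order_reversing_quasi_involution X T" and "K \<subseteq> X" and "K \<subseteq> T K"
    and "x \<in> K"
  shows "x \<in> T {x}"
proof -
  have "T K \<subseteq> T {x}"
    using order_reversing_quasi_involutionD_antimono assms by (metis empty_subsetI insert_subset)
  then show ?thesis
    using assms(3,4) by blast
qed

theorem lemma6p1:
  fixes X :: "'a set" and T :: "'a set \<Rightarrow> 'a set" and K :: "'a set"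
  assumes "order_reversing_quasi_involution X T"
    and "K \<subseteq> X"
    and "K = T K"
  shows "K \<subseteq> {x \<in> X. x \<in> T {x}}"
  using mem_T_singleton_if_subset_T[OF assms(1,2)] assms(2,3) by blast

end
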